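(* Let $p$ be a prime, $q$ and $r$ powers of $p$, and $n$ an integer prime to $p$. Let $S^\times=(\mathbb Z/n\mathbb Z)^\times\times\mathbb F_q^\times$, with $\langle r\rangle$ acting by $r\cdot(i,\alpha)=(ri,\alpha^{1/r})$, and let $O^\times$ be the set of orbits. Then (1) $\sum_{o\in O^\times}|o|=|S^\times|=\varphi(n)(q-1)$; (2) $|O^\times|\ll q/\log q$; (3) $\sum_{o\in O^\times}\log|o|\ll q\log\log q/\log q$, where the implied constants depend only on $r$ and $n$ (and $q$ varies over powers of $p$).
   Context: $\varphi$ denotes Euler's totient function. *)

theory Defs
  imports Complex_Main "HOL-Algebra.Ring" "HOL-Number_Theory.Totient"
begin

definition unitsS :: "('a, 'b) ring_scheme \<Rightarrow> nat \<Rightarrow> (nat \<times> 'a) set" where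
  "unitsS F n = {i \<in> {0..<n}. coprime i n} \<times> (carrier F - {\<zero>\<^bsub>F\<^esub>})"

definition rth_root :: "('a, 'b) ring_scheme \<Rightarrow> nat \<Rightarrow> 'a \<Rightarrow> 'a" where
  "rth_root F r \<alpha> = (THE \<beta>. \<beta> \<in> carrier F - {\<zero>\<^bsub>F\<^esub>} \<and> \<beta> [^]\<^bsub>F\<^esub> r = \<alpha>)"

definition act_r :: "('a, 'b) ring_scheme \<Rightarrow> nat \<Rightarrow> nat \<Rightarrow> nat \<times> 'a \<Rightarrow> nat \<times> 'a" where
  "act_r F n r x = ((r * fst x) mod n, rth_root F r (snd x))"

text \<open>Orbit of x under the cyclic group generated by r (on a finite set the
  forward iterates of the generator give the whole orbit).\<close>
definition orbit_r :: "('a, 'b) ring_scheme \<Rightarrow> nat \<Rightarrow> nat \<Rightarrow> nat \<times> 'a \<Rightarrow> (nat \<times> 'a) set" where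
  "orbit_r F n r x = {(act_r F n r ^^ k) x | k. True}"

definition orbits_r :: "('a, 'b) ring_scheme \<Rightarrow> nat \<Rightarrow> nat \<Rightarrow> (nat \<times> 'a) set set" where
  "orbits_r F n r = orbit_r F n r ` unitsS F n"

end

(* The r-th root on F_q^x, q = p^m, is the power map alpha |-> alpha^(r^(m-1)), since r^m = 1
   modulo q - 1.  So the action is T(i, alpha) = (r i mod n, alpha^(r^(m-1))), and by Euler's
   theorem T^(m totient(n)) is the identity on S^x.  Its forward orbits therefore partition S^x,
   which gives (1), and each has at most m totient(n) elements.
   If (i, alpha) lies on an orbit of length < L, then alpha^(r^j - 1) = 1 for some 1 <= j < L,
   so there are at most totient(n) L r^L such points.  Counting the orbits of length >= L by
   (1), the number of orbits is at most |S^x| / L + totient(n) L r^L; taking L about m / (3k),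
   where r = p^k, this is O(q / m) = O(q / log q).  Finally log |o| <= log (m totient(n))
   = log log q + O(1) gives (3). *)

theory Submission
  imports Defs "HOL-Number_Theory.Number_Theory" "HOL-Algebra.Multiplicative_Group"
    "HOL-Analysis.Complex_Transcendental"
begin

lemma funpow_apply_funpow: "(f ^^ a) ((f ^^ b) x) = (f ^^ (a + b)) x"
  by (simp add: funpow_add)

locale periodic_map =
  fixes f :: "'a \<Rightarrow> 'a" and S :: "'a set" and N :: nat
  assumes maps_into: "x \<in> S \<Longrightarrow> f x \<in> S"
    and period_pos: "0 < N"
    and funpow_period: "x \<in> S \<Longrightarrow> (f ^^ N) x = x"
begin

definition orbit :: "'a \<Rightarrow> 'a set" where
  "orbit x = {(f ^^ k) x | k. True}"

lemma in_orbit_iff: "y \<in> orbit x \<longleftrightarrow> (\<exists>k. y = (f ^^ k) x)"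
  by (simp add: orbit_def)

lemma funpow_in_orbit: "(f ^^ k) x \<in> orbit x"
  by (auto simp: in_orbit_iff)

lemma funpow_mem: "x \<in> S \<Longrightarrow> (f ^^ k) x \<in> S"
  by (induction k) (auto intro: maps_into)

lemma funpow_mult_period: "x \<in> S \<Longrightarrow> (f ^^ (N * c)) x = x"
  by (induction c) (simp_all add: funpow_add funpow_period)

lemma funpow_mod_period: "x \<in> S \<Longrightarrow> (f ^^ k) x = (f ^^ (k mod N)) x"
  by (metis funpow_apply_funpow funpow_mult_period mod_mult_div_eq)

lemma orbit_eq_image:
  assumes "x \<in> S" shows "orbit x = (\<lambda>k. (f ^^ k) x) ` {..<N}"
proof
  show "orbit x \<subseteq> (\<lambda>k. (f ^^ k) x) ` {..<N}"
  proof
    fix y assume "y \<in> orbit x"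
    then obtain k where "y = (f ^^ (k mod N)) x"
      using funpow_mod_period[OF assms] by (auto simp: in_orbit_iff)
    moreover have "k mod N < N" using period_pos by simp
    ultimately show "y \<in> (\<lambda>k. (f ^^ k) x) ` {..<N}" by blast
  qed
qed (auto simp: in_orbit_iff)

lemma finite_orbit: "x \<in> S \<Longrightarrow> finite (orbit x)"
  using orbit_eq_image by simp

lemma card_orbit_le: "x \<in> S \<Longrightarrow> card (orbit x) \<le> N"
  using orbit_eq_image card_image_le[of "{..<N}"] by fastforce

lemma orbit_subset: "x \<in> S \<Longrightarrow> orbit x \<subseteq> S"
  using funpow_mem by (auto simp: in_orbit_iff)

lemma self_in_orbit: "x \<in> orbit x"
  using funpow_in_orbit[of 0] by simp

lemma card_orbit_pos: "x \<in> S \<Longrightarrow> 0 < card (orbit x)"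
  using finite_orbit self_in_orbit by (metis card_gt_0_iff empty_iff)

lemma orbit_subset_orbit: "y \<in> orbit x \<Longrightarrow> orbit y \<subseteq> orbit x"
  by (auto simp: in_orbit_iff funpow_apply_funpow)

lemma orbit_eq_orbit:
  assumes "x \<in> S" "y \<in> orbit x" shows "orbit y = orbit x"
proof
  obtain a where a: "a < N" "y = (f ^^ a) x" using assms orbit_eq_image by auto
  then have "(f ^^ (N - a)) y = x"
    using funpow_period[OF assms(1)] by (simp add: funpow_apply_funpow)
  then have "x \<in> orbit y" using funpow_in_orbit by metis
  then show "orbit x \<subseteq> orbit y" by (rule orbit_subset_orbit)
qed (rule orbit_subset_orbit[OF assms(2)])

lemma sum_card_orbits:
  assumes "finite S" shows "sum card (orbit ` S) = card S"
proof -
  have "pairwise disjnt (orbit ` S)"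
  proof (rule pairwise_imageI)
    fix x y assume x: "x \<in> S" and y: "y \<in> S" and "orbit x \<noteq> orbit y"
    show "disjnt (orbit x) (orbit y)"
    proof (rule ccontr)
      assume "\<not> disjnt (orbit x) (orbit y)"
      then obtain z where "z \<in> orbit x" "z \<in> orbit y" unfolding disjnt_def by blast
      with x y have "orbit x = orbit y" by (metis orbit_eq_orbit)
      with \<open>orbit x \<noteq> orbit y\<close> show False ..
    qed
  qed
  then have "card (\<Union> (orbit ` S)) = sum card (orbit ` S)"
    by (rule card_Union_disjoint) (use finite_orbit in blast)
  moreover have "\<Union> (orbit ` S) = S"
  proof
    show "\<Union> (orbit ` S) \<subseteq> S" using orbit_subset by blast
    show "S \<subseteq> \<Union> (orbit ` S)" using self_in_orbit by blast
  qed
  ultimately show ?thesis by simp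
qed

lemma return_if_card_orbit_less:
  assumes x: "x \<in> S" and card_less: "card (orbit x) < L"
  obtains j where "j \<in> {1..<L}" "(f ^^ j) x = x"
proof -
  have "\<not> inj_on (\<lambda>k. (f ^^ k) x) {..<L}"
  proof
    assume "inj_on (\<lambda>k. (f ^^ k) x) {..<L}"
    then have "L = card ((\<lambda>k. (f ^^ k) x) ` {..<L})" by (simp add: card_image)
    also have "\<dots> \<le> card (orbit x)"
      using funpow_in_orbit by (intro card_mono[OF finite_orbit[OF x]]) blast
    finally have "L \<le> card (orbit x)" .
    with card_less show False by simp
  qed
  then obtain a b where ab: "a < b" "b < L" "(f ^^ a) x = (f ^^ b) x"
    unfolding inj_on_def by (metis lessThan_iff linorder_neqE_nat)
  have "a \<le> N * a" using period_pos by simp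
  then have shift_a: "(N * a - a) + a = N * a" and shift_b: "(N * a - a) + b = (b - a) + N * a"
    using ab(1) by auto
  have "x = (f ^^ (N * a - a)) ((f ^^ a) x)"
    using funpow_mult_period[OF x] by (simp only: funpow_apply_funpow shift_a)
  also have "\<dots> = (f ^^ (N * a - a)) ((f ^^ b) x)" using ab(3) by simp
  also have "\<dots> = (f ^^ (b - a)) ((f ^^ (N * a)) x)" by (simp only: funpow_apply_funpow shift_b)
  also have "\<dots> = (f ^^ (b - a)) x" using funpow_mult_period[OF x] by simp
  finally have "(f ^^ (b - a)) x = x" ..
  then show thesis using ab by (intro that[of "b - a"]) auto
qed

lemma mult_card_orbits_le:
  assumes fin: "finite S"
  shows "L * card (orbit ` S) \<le> card S + L * card {x \<in> S. card (orbit x) < L}"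
proof -
  let ?small = "{x \<in> S. card (orbit x) < L}"
  let ?large = "{Y \<in> orbit ` S. L \<le> card Y}"
  have "orbit ` S \<subseteq> ?large \<union> orbit ` ?small" by auto
  then have "card (orbit ` S) \<le> card (?large \<union> orbit ` ?small)"
    using fin by (intro card_mono) auto
  also have "\<dots> \<le> card ?large + card (orbit ` ?small)" by (rule card_Un_le)
  also have "card (orbit ` ?small) \<le> card ?small" using fin by (intro card_image_le) simp
  finally have "card (orbit ` S) \<le> card ?large + card ?small" by simp
  then have "L * card (orbit ` S) \<le> L * (card ?large + card ?small)" by simp
  also have "\<dots> = card ?large * L + L * card ?small" by (simp add: algebra_simps)
  also have "card ?large * L \<le> sum card ?large"
    using sum_bounded_below[of ?large L card] by simp
  also have "\<dots> \<le> sum card (orbit ` S)" using fin by (intro sum_mono2) auto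
  also have "\<dots> = card S" using fin by (rule sum_card_orbits)
  finally show ?thesis by simp
qed

lemma sum_ln_card_orbits_le:
  "(\<Sum>Y \<in> orbit ` S. ln (real (card Y))) \<le> real (card (orbit ` S)) * ln (real N)"
proof (rule sum_bounded_above)
  fix Y assume "Y \<in> orbit ` S"
  then obtain x where "x \<in> S" "Y = orbit x" by blast
  then have "0 < card Y" "card Y \<le> N" using card_orbit_le card_orbit_pos by auto
  then show "ln (real (card Y)) \<le> ln (real N)" by simp
qed

end

lemma (in group) nat_pow_eq_self_if_cong_one:
  assumes x: "x \<in> carrier G" and "[e = 1] (mod order G)" and "1 \<le> e"
  shows "x [^] e = x"
proof -
  obtain c where "e - 1 = order G * c"
    using assms(2,3) by (auto simp: cong_altdef_nat elim: dvdE)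
  then have "e = Suc (order G * c)" using assms(3) by simp
  then have "x [^] e = (x [^] order G) [^] c \<otimes> x"
    using x by (simp add: nat_pow_pow)
  then show ?thesis using x by (simp add: pow_order_eq_1)
qed

lemma card_coprime_residues: "card {i \<in> {0..<n}. coprime i n} = totient n"
proof (cases "n \<le> 1")
  case True
  then have "n = 0 \<or> n = 1" by auto
  then show ?thesis by auto
next
  case False
  then have "\<not> coprime 0 n" "\<not> coprime n n" by auto
  then have "{i \<in> {0..<n}. coprime i n} = totatives n"
    unfolding in_totatives_iff set_eq_iff by (metis atLeastLessThan_iff le_less mem_Collect_eq gr0I le0)
  then show ?thesis by (simp add: totient_def)
qed

lemma ln_ln_3_pos: "0 < ln (ln (3 :: real))"
proof -
  have "ln (272 / 100) < ln (3 :: real)" by simp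
  then have "1 < ln (3 :: real)" using ln_272_gt_1 by linarith
  then show ?thesis by simp
qed

lemma ln_ln_add_le_mult_ln_ln:
  fixes x B :: real
  assumes "3 \<le> x"
  shows "ln (ln x) + B \<le> (1 + \<bar>B\<bar> / ln (ln 3)) * ln (ln x)"
proof -
  have "ln (ln 3) \<le> ln (ln x)" using assms by simp
  then have "\<bar>B\<bar> / ln (ln 3) * ln (ln 3) \<le> \<bar>B\<bar> / ln (ln 3) * ln (ln x)"
    using ln_ln_3_pos by (intro mult_left_mono) auto
  then show ?thesis using ln_ln_3_pos by (simp add: algebra_simps)
qed

text \<open>The first factor bounds the number of orbits times log q / q, the second bounds
  log (m totient(n)) / log log q for q = p^m \<ge> 3.\<close>
definition orbit_bound_const :: "nat \<Rightarrow> nat \<Rightarrow> nat \<Rightarrow> real" where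
  "orbit_bound_const p k n = real (12 * k * totient n) * ln (real p)
     * (1 + \<bar>ln (real (totient n)) - ln (ln (real p))\<bar> / ln (ln 3))"

lemma orbit_bound_const_pos: "1 \<le> k \<Longrightarrow> 1 \<le> n \<Longrightarrow> 1 < p \<Longrightarrow> 0 < orbit_bound_const p k n"
  using ln_ln_3_pos by (simp add: orbit_bound_const_def add_pos_nonneg)

locale frobenius_action = field R for R :: "('a, 'b) ring_scheme" (structure) +
  fixes p m k n :: nat
  assumes finite_carrier: "finite (carrier R)"
    and card_carrier: "card (carrier R) = p ^ m"
    and p_gt_1: "1 < p" and m_pos: "1 \<le> m" and k_pos: "1 \<le> k" and n_pos: "1 \<le> n"
    and coprime_n_p: "coprime n p"
begin

abbreviation r :: nat where "r \<equiv> p ^ k"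

sublocale M: group "mult_of R"
  by (rule field_mult_group)

lemma r_gt_1: "1 < r"
  using p_gt_1 k_pos by (intro one_less_power) auto

lemma cong_r_pow_m_mult: "[r ^ (m * c) = 1] (mod (p ^ m - 1))"
proof -
  have "[p ^ m = 1] (mod (p ^ m - 1))" using p_gt_1 by (simp add: cong_altdef_nat)
  then have "[(p ^ m) ^ (k * c) = 1 ^ (k * c)] (mod (p ^ m - 1))" by (rule cong_pow)
  then show ?thesis by (simp add: power_mult[symmetric] ac_simps)
qed

lemma nat_pow_r_pow_m_mult:
  assumes "a \<in> carrier R - {\<zero>}" shows "a [^] (r ^ (m * c)) = a"
proof -
  have "order (mult_of R) = p ^ m - 1"
    using order_mult_of[OF finite_carrier] card_carrier by (simp add: order_def)
  then show ?thesis
    using M.nat_pow_eq_self_if_cong_one[of a "r ^ (m * c)"] assms cong_r_pow_m_mult r_gt_1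
    by (simp add: nat_pow_mult_of)
qed

lemma nat_pow_nonzero: "a \<in> carrier R - {\<zero>} \<Longrightarrow> a [^] (e :: nat) \<in> carrier R - {\<zero>}"
  using M.nat_pow_closed[of a e] by (simp add: nat_pow_mult_of)

lemma nat_pow_r_pow_pred_m:
  assumes "b \<in> carrier R - {\<zero>}" shows "(b [^] r) [^] (r ^ (m - 1)) = b"
proof -
  have "r * r ^ (m - 1) = r ^ (m * 1)" using m_pos by (simp flip: power_Suc)
  then show ?thesis using assms nat_pow_r_pow_m_mult[OF assms, of 1] by (simp add: nat_pow_pow)
qed

lemma rth_root_eq_nat_pow:
  assumes a: "a \<in> carrier R - {\<zero>}" shows "rth_root R r a = a [^] (r ^ (m - 1))"
  unfolding rth_root_def
proof (rule the_equality)
  have "(a [^] (r ^ (m - 1))) [^] r = a"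
    using nat_pow_r_pow_pred_m[OF a] a by (simp add: nat_pow_pow mult.commute)
  then show "a [^] (r ^ (m - 1)) \<in> carrier R - {\<zero>} \<and> (a [^] (r ^ (m - 1))) [^] r = a"
    using nat_pow_nonzero[OF a] by simp
next
  fix b assume "b \<in> carrier R - {\<zero>} \<and> b [^] r = a"
  then show "b = a [^] (r ^ (m - 1))" using nat_pow_r_pow_pred_m[of b] by simp
qed

lemma funpow_act_r:
  assumes x: "x \<in> unitsS R n"
  shows "(act_r R n r ^^ j) x = ((r ^ j * fst x) mod n, snd x [^] (r ^ ((m - 1) * j)))"
proof (induction j)
  case 0
  then show ?case using x by (auto simp: unitsS_def prod_eq_iff)
next
  case (Suc j)
  have a: "snd x \<in> carrier R - {\<zero>}" using x by (auto simp: unitsS_def)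
  have "rth_root R r (snd x [^] (r ^ ((m - 1) * j))) = snd x [^] (r ^ ((m - 1) * Suc j))"
    using rth_root_eq_nat_pow[OF nat_pow_nonzero[OF a]] a
    by (simp add: nat_pow_pow power_add[symmetric] ac_simps)
  moreover have "(r * ((r ^ j * fst x) mod n)) mod n = (r ^ Suc j * fst x) mod n"
    by (simp add: mod_mult_right_eq mult.assoc)
  ultimately show ?case using Suc by (simp add: act_r_def)
qed

lemma act_r_in_unitsS:
  assumes x: "x \<in> unitsS R n" shows "act_r R n r x \<in> unitsS R n"
proof -
  have "coprime (fst x) n" and a: "snd x \<in> carrier R - {\<zero>}" using x by (auto simp: unitsS_def)
  moreover have "coprime r n" using coprime_n_p by (simp add: coprime_commute)
  ultimately have "coprime ((r * fst x) mod n) n" using n_pos by simp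
  then show ?thesis
    using n_pos rth_root_eq_nat_pow[OF a] nat_pow_nonzero[OF a] by (auto simp: act_r_def unitsS_def)
qed

lemma funpow_act_r_period:
  assumes x: "x \<in> unitsS R n" shows "(act_r R n r ^^ (m * totient n)) x = x"
proof -
  have i: "fst x < n" and a: "snd x \<in> carrier R - {\<zero>}" using x by (auto simp: unitsS_def)
  have "[r ^ totient n = 1] (mod n)"
    using coprime_n_p by (intro euler_theorem) (simp add: coprime_commute)
  then have "[(r ^ totient n) ^ m * fst x = 1 ^ m * fst x] (mod n)"
    by (intro cong_mult cong_pow cong_refl)
  then have "[r ^ (m * totient n) * fst x = fst x] (mod n)"
    by (simp add: power_mult[symmetric] ac_simps)
  then have "(r ^ (m * totient n) * fst x) mod n = fst x" using i by (simp add: cong_def)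
  moreover have "snd x [^] (r ^ ((m - 1) * (m * totient n))) = snd x"
    using nat_pow_r_pow_m_mult[OF a, of "(m - 1) * totient n"] by (simp add: ac_simps)
  ultimately show ?thesis by (simp add: funpow_act_r[OF x] prod_eq_iff)
qed

sublocale periodic_map "act_r R n r" "unitsS R n" "m * totient n"
  using act_r_in_unitsS funpow_act_r_period m_pos n_pos by unfold_locales auto

lemma finite_unitsS: "finite (unitsS R n)"
  using finite_carrier by (simp add: unitsS_def)

lemma orbits_r_eq: "orbits_r R n r = orbit ` unitsS R n"
  by (simp add: orbits_r_def orbit_r_def orbit_def)

lemma card_unitsS: "card (unitsS R n) = totient n * (p ^ m - 1)"
  unfolding unitsS_def card_cartesian_product card_coprime_residues
  using finite_carrier card_carrier by (simp add: card_Diff_singleton)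

lemma nat_pow_r_pow_minus_1_if_return:
  assumes x: "x \<in> unitsS R n" and return: "(act_r R n r ^^ j) x = x"
  shows "snd x [^] (r ^ j - 1) = \<one>"
proof -
  define a where "a = snd x"
  have a: "a \<in> carrier R - {\<zero>}" using x by (auto simp: unitsS_def a_def)
  have "a [^] (r ^ ((m - 1) * j)) = snd ((act_r R n r ^^ j) x)"
    by (simp add: funpow_act_r[OF x] a_def)
  also have "\<dots> = a" by (simp add: return a_def)
  finally have "a [^] (r ^ ((m - 1) * j)) = a" .
  then have "a [^] (r ^ j) = (a [^] (r ^ ((m - 1) * j))) [^] (r ^ j)" by simp
  also have "\<dots> = a [^] (r ^ ((m - 1) * j) * r ^ j)" using a by (simp add: nat_pow_pow)
  also have "r ^ ((m - 1) * j) * r ^ j = r ^ (m * j)"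
    using m_pos by (cases m) (simp_all add: power_add[symmetric] add.commute)
  also have "a [^] (r ^ (m * j)) = a" by (rule nat_pow_r_pow_m_mult[OF a])
  finally have "a [^] (r ^ j) = a" .
  moreover have "0 < r ^ j" using p_gt_1 by simp
  then have "Suc (r ^ j - 1) = r ^ j" by simp
  ultimately have "a [^] (r ^ j - 1) \<otimes> a = a" by (metis nat_pow_Suc)
  then show ?thesis
    using M.r_cancel_one[of a "a [^] (r ^ j - 1)"] a nat_pow_nonzero[OF a]
    by (simp add: a_def nat_pow_mult_of)
qed

lemma card_small_orbit_points:
  "card {x \<in> unitsS R n. card (orbit x) < L} \<le> totient n * (L * r ^ L)"
proof -
  let ?U = "{i \<in> {0..<n}. coprime i n}"
  let ?V = "\<Union>j\<in>{1..<L}. {a \<in> carrier R. a [^] (r ^ j - 1) = \<one>}"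
  have "{x \<in> unitsS R n. card (orbit x) < L} \<subseteq> ?U \<times> ?V"
  proof
    fix x assume "x \<in> {x \<in> unitsS R n. card (orbit x) < L}"
    then obtain j where "j \<in> {1..<L}" "snd x [^] (r ^ j - 1) = \<one>" "x \<in> unitsS R n"
      using return_if_card_orbit_less nat_pow_r_pow_minus_1_if_return by blast
    then show "x \<in> ?U \<times> ?V" by (auto simp: unitsS_def mem_Times_iff)
  qed
  moreover have "finite (?U \<times> ?V)" using finite_carrier by auto
  ultimately have "card {x \<in> unitsS R n. card (orbit x) < L} \<le> card (?U \<times> ?V)"
    by (intro card_mono)
  also have "\<dots> = card ?U * card ?V" by (rule card_cartesian_product)
  also have "card ?V \<le> (\<Sum>j\<in>{1..<L}. card {a \<in> carrier R. a [^] (r ^ j - 1) = \<one>})"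
    by (rule card_UN_le) simp
  also have "\<dots> \<le> (\<Sum>j\<in>{1..<L}. r ^ L)"
  proof (rule sum_mono)
    fix j assume j: "j \<in> {1..<L}"
    have "r ^ 1 \<le> r ^ j" using j r_gt_1 by (intro power_increasing) auto
    then have "card {a \<in> carrier R. a [^] (r ^ j - 1) = \<one>} \<le> r ^ j - 1"
      using r_gt_1 by (intro num_roots_le_deg[OF finite_carrier]) auto
    moreover have "r ^ j \<le> r ^ L" using j r_gt_1 by (intro power_increasing) auto
    ultimately show "card {a \<in> carrier R. a [^] (r ^ j - 1) = \<one>} \<le> r ^ L" by linarith
  qed
  also have "\<dots> \<le> L * r ^ L" by simp
  finally show ?thesis using card_coprime_residues[of n] by simp
qed

text \<open>With r^(3L) \<le> q, the at most totient(n) L r^L points on orbits shorter than L are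
  negligible.\<close>
lemma card_orbits_le_if_three_k_L_le_m:
  assumes "3 * k * L \<le> m"
  shows "L * card (orbit ` unitsS R n) \<le> 2 * totient n * p ^ m"
proof -
  have "L * L \<le> 2 ^ L * 2 ^ L" by (intro mult_le_mono less_imp_le less_exp)
  also have "\<dots> \<le> r ^ L * r ^ L" using r_gt_1 by (intro mult_le_mono power_mono) auto
  finally have "L * L \<le> r ^ L * r ^ L" .
  then have "L * L * r ^ L \<le> r ^ L * r ^ L * r ^ L" by (rule mult_le_mono1)
  also have "\<dots> = p ^ (3 * k * L)"
    unfolding power_mult[symmetric] power_add[symmetric] by (simp add: numeral_3_eq_3 algebra_simps)
  also have "\<dots> \<le> p ^ m" using assms p_gt_1 by (intro power_increasing) auto
  finally have LLr: "L * L * r ^ L \<le> p ^ m" .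
  have "L * card (orbit ` unitsS R n)
      \<le> card (unitsS R n) + L * card {x \<in> unitsS R n. card (orbit x) < L}"
    using finite_carrier by (intro mult_card_orbits_le) (simp add: unitsS_def)
  also have "\<dots> \<le> totient n * p ^ m + L * (totient n * (L * r ^ L))"
    using card_small_orbit_points by (intro add_mono mult_le_mono2) (auto simp: card_unitsS)
  also have "L * (totient n * (L * r ^ L)) = totient n * (L * L * r ^ L)" by simp
  also have "\<dots> \<le> totient n * p ^ m" using LLr by (rule mult_le_mono2)
  finally show ?thesis by simp
qed

lemma m_mult_card_orbits_le: "m * card (orbit ` unitsS R n) \<le> 12 * k * totient n * p ^ m"
proof (cases "m < 3 * k")
  case True
  have "card (orbit ` unitsS R n) \<le> card (unitsS R n)"
    using finite_carrier by (intro card_image_le) (simp add: unitsS_def)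
  also have "\<dots> \<le> totient n * p ^ m" by (simp add: card_unitsS)
  finally have "m * card (orbit ` unitsS R n) \<le> 3 * k * (totient n * p ^ m)"
    using True by (intro mult_le_mono) auto
  also have "\<dots> \<le> 12 * k * totient n * p ^ m" by (simp add: mult.assoc)
  finally show ?thesis .
next
  case False
  define L where "L = m div (3 * k)"
  have "1 \<le> L" using False k_pos unfolding L_def by (simp add: div_greater_zero_iff Suc_le_eq)
  have "m = 3 * k * L + m mod (3 * k)" unfolding L_def by simp
  moreover have "m mod (3 * k) < 3 * k" using k_pos by simp
  ultimately have "m < 3 * k * (L + 1)" by simp
  also have "\<dots> \<le> 6 * k * L" using \<open>1 \<le> L\<close> by simp
  finally have "m * card (orbit ` unitsS R n) \<le> 6 * k * (L * card (orbit ` unitsS R n))"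
    by (simp add: ac_simps)
  also have "\<dots> \<le> 6 * k * (2 * totient n * p ^ m)"
    using k_pos by (intro mult_le_mono2 card_orbits_le_if_three_k_L_le_m)
      (simp add: L_def)
  finally show ?thesis by simp
qed

lemma card_orbits_r_le:
  "real (card (orbits_r R n r))
    \<le> real (12 * k * totient n) * ln (real p) * real (p ^ m) / ln (real (p ^ m))"
proof -
  have "real m * real (card (orbits_r R n r)) \<le> real (12 * k * totient n) * real (p ^ m)"
    using m_mult_card_orbits_le unfolding orbits_r_eq by (metis of_nat_le_iff of_nat_mult)
  then show ?thesis using m_pos p_gt_1 by (simp add: ln_realpow field_simps)
qed

lemma ln_period_le:
  assumes "3 \<le> p ^ m"
  shows "ln (real (m * totient n))
    \<le> (1 + \<bar>ln (real (totient n)) - ln (ln (real p))\<bar> / ln (ln 3)) * ln (ln (real (p ^ m)))"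
proof -
  have "ln (real (m * totient n)) = ln (ln (real (p ^ m))) + (ln (real (totient n)) - ln (ln (real p)))"
    using m_pos n_pos p_gt_1 by (simp add: ln_realpow ln_mult)
  also have "\<dots> \<le> (1 + \<bar>ln (real (totient n)) - ln (ln (real p))\<bar> / ln (ln 3)) * ln (ln (real (p ^ m)))"
    using assms by (intro ln_ln_add_le_mult_ln_ln) linarith
  finally show ?thesis .
qed

lemma orbits_r_bounds:
  assumes "3 \<le> p ^ m"
  defines "C \<equiv> orbit_bound_const p k n" and "q \<equiv> real (p ^ m)"
  shows "real (card (orbits_r R n r)) \<le> C * q / ln q"
    and "(\<Sum>Y\<in>orbits_r R n r. ln (real (card Y))) \<le> C * q * ln (ln q) / ln q"
proof -
  define K where "K = 1 + \<bar>ln (real (totient n)) - ln (ln (real p))\<bar> / ln (ln 3)"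
  have "1 \<le> K" using ln_ln_3_pos by (simp add: K_def)
  have q: "3 \<le> q" using assms(1) unfolding q_def by linarith
  then have "ln (ln 3) \<le> ln (ln q)" by simp
  then have "0 \<le> ln (ln q)" using ln_ln_3_pos by linarith
  have orbits: "real (card (orbits_r R n r)) \<le> real (12 * k * totient n) * ln (real p) * q / ln q"
    unfolding q_def by (rule card_orbits_r_le)
  also have "\<dots> \<le> C * q / ln q"
    using \<open>1 \<le> K\<close> p_gt_1 q
    by (simp add: C_def K_def orbit_bound_const_def divide_right_mono mult_left_mono)
  finally show "real (card (orbits_r R n r)) \<le> C * q / ln q" .
  have "(\<Sum>Y\<in>orbits_r R n r. ln (real (card Y))) \<le> real (card (orbits_r R n r)) * (K * ln (ln q))"
    using sum_ln_card_orbits_le ln_period_le[OF assms(1)] unfolding orbits_r_eq K_def q_def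
    by (meson mult_left_mono of_nat_0_le_iff order_trans)
  also have "\<dots> \<le> real (12 * k * totient n) * ln (real p) * q / ln q * (K * ln (ln q))"
    using orbits \<open>1 \<le> K\<close> \<open>0 \<le> ln (ln q)\<close> by (intro mult_right_mono) auto
  finally show "(\<Sum>Y\<in>orbits_r R n r. ln (real (card Y))) \<le> C * q * ln (ln q) / ln q"
    by (simp add: C_def K_def orbit_bound_const_def ac_simps)
qed

end

theorem lemma11p3:
  fixes p r n :: nat
  assumes "prime p" and "\<exists>k\<ge>1. r = p ^ k" and "n \<ge> 1" and "coprime n p"
  shows "\<exists>C::real. C > 0 \<and>
    (\<forall>(F :: nat ring) q. field F \<longrightarrow> finite (carrier F) \<longrightarrow>
       card (carrier F) = q \<longrightarrow> (\<exists>m\<ge>1. q = p ^ m) \<longrightarrow> q \<ge> 3 \<longrightarrow>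
       sum card (orbits_r F n r) = card (unitsS F n) \<and>
       card (unitsS F n) = totient n * (q - 1) \<and>
       real (card (orbits_r F n r)) \<le> C * real q / ln (real q) \<and>
       sum (\<lambda>orb. ln (real (card orb))) (orbits_r F n r)
          \<le> C * real q * ln (ln (real q)) / ln (real q))"
proof -
  obtain k where k: "1 \<le> k" and r_eq: "r = p ^ k" using assms(2) by blast
  show ?thesis unfolding r_eq
  proof (intro exI[of _ "orbit_bound_const p k n"] conjI allI impI)
    show "0 < orbit_bound_const p k n"
      using k assms(3) prime_gt_1_nat[OF assms(1)] by (rule orbit_bound_const_pos)
    fix F :: "nat ring" and q
    assume F: "field F" "finite (carrier F)" "card (carrier F) = q" and "\<exists>m\<ge>1. q = p ^ m"
      and "3 \<le> q"
    then obtain m where m: "1 \<le> m" "q = p ^ m" by blast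
    interpret frobenius_action F p m k n
      using F m k assms(3,4) prime_gt_1_nat[OF assms(1)]
      by (intro frobenius_action.intro frobenius_action_axioms.intro) (auto simp: field_def)
    show "sum card (orbits_r F n (p ^ k)) = card (unitsS F n)"
      using sum_card_orbits[OF finite_unitsS] by (simp add: orbits_r_eq)
    show "card (unitsS F n) = totient n * (q - 1)" using card_unitsS m by simp
    show "real (card (orbits_r F n (p ^ k))) \<le> orbit_bound_const p k n * real q / ln (real q)"
      and "(\<Sum>Y\<in>orbits_r F n (p ^ k). ln (real (card Y)))
        \<le> orbit_bound_const p k n * real q * ln (ln (real q)) / ln (real q)"
      using orbits_r_bounds \<open>3 \<le> q\<close> m(2) by simp_all
  qed
qed

end
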